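(* Let $G$ be a graph whose twin graph $G^*$ is isomorphic to $K_3$ and has at most one vertex of type (1K). Then $D(G)=n(G)-2$ if and only if $G$ is isomorphic to $K_{1,2,2}$ or to $K_{1,1,t}$ for some $t\ge 2$.
   Context: All graphs are finite and simple; $n(G)=|V(G)|$; $N_G(u)$ is the neighborhood of $u$; $K_{a,b,c}$ is the complete tripartite graph. A distinguishing coloring of a graph $G$ is a (not necessarily proper) vertex coloring such that the only automorphism of $G$ mapping every vertex to a vertex of the same color is the identity; the distinguishing number $D(G)$ is the minimum number of colors in a distinguishing coloring of $G$. Two distinct vertices $u,v$ are twins if $N_G(u)\setminus\{v\}=N_G(v)\setminus\{u\}$. The relation $u\equiv v$ iff $u=v$ or $u,v$ are twins is an equivalence relation; the class of $v$ is denoted $v^*$. The twin graph $G^*$ has the equivalence classes as vertices, distinct classes $u^*,v^*$ being adjacent iff $uv\in E(G)$. Each class induces a complete or an edgeless graph. A class $v^*$ is of type (1) if $|v^*|=1$, of type (K) if $|v^*|\ge 2$ and it induces a complete graph, and of type (N) if $|v^*|\ge2$ and it induces an edgeless graph; type (1K) means type (1) or (K), type (1N) means (1) or (N), and type (KN) means (K) or (N). *)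

theory Defs
  imports Main
begin

definition graph :: "'a set \<Rightarrow> 'a set set \<Rightarrow> bool" where
  "graph V E \<longleftrightarrow> finite V \<and> (\<forall>e\<in>E. \<exists>u v. e = {u, v} \<and> u \<in> V \<and> v \<in> V \<and> u \<noteq> v)"

definition nbhd :: "'a set \<Rightarrow> 'a set set \<Rightarrow> 'a \<Rightarrow> 'a set" where
  "nbhd V E u = {v \<in> V. {u, v} \<in> E}"

definition graph_iso :: "'a set \<Rightarrow> 'a set set \<Rightarrow> 'b set \<Rightarrow> 'b set set \<Rightarrow> bool" where
  "graph_iso V E W F \<longleftrightarrow> (\<exists>f. bij_betw f V W \<and>
      (\<forall>u\<in>V. \<forall>v\<in>V. {u, v} \<in> E \<longleftrightarrow> {f u, f v} \<in> F))"

definition automorphism :: "'a set \<Rightarrow> 'a set set \<Rightarrow> ('a \<Rightarrow> 'a) \<Rightarrow> bool" where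
  "automorphism V E f \<longleftrightarrow> bij_betw f V V \<and>
      (\<forall>u\<in>V. \<forall>v\<in>V. {u, v} \<in> E \<longleftrightarrow> {f u, f v} \<in> E)"

definition distinguishing :: "'a set \<Rightarrow> 'a set set \<Rightarrow> nat \<Rightarrow> ('a \<Rightarrow> nat) \<Rightarrow> bool" where
  "distinguishing V E k c \<longleftrightarrow> c ` V \<subseteq> {..<k} \<and>
      (\<forall>f. automorphism V E f \<and> (\<forall>v\<in>V. c (f v) = c v) \<longrightarrow> (\<forall>v\<in>V. f v = v))"

definition dist_num :: "'a set \<Rightarrow> 'a set set \<Rightarrow> nat" where
  "dist_num V E = (LEAST k. \<exists>c. distinguishing V E k c)"

definition twins :: "'a set \<Rightarrow> 'a set set \<Rightarrow> 'a \<Rightarrow> 'a \<Rightarrow> bool" where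
  "twins V E u v \<longleftrightarrow> u \<noteq> v \<and> nbhd V E u - {v} = nbhd V E v - {u}"

definition twin_class :: "'a set \<Rightarrow> 'a set set \<Rightarrow> 'a \<Rightarrow> 'a set" where
  "twin_class V E v = {u \<in> V. u = v \<or> twins V E u v}"

text \<open>The twin graph G*: vertices are the twin classes, distinct classes
  adjacent iff some (equivalently every) pair of representatives is adjacent.\<close>
definition twin_classes :: "'a set \<Rightarrow> 'a set set \<Rightarrow> 'a set set" where
  "twin_classes V E = twin_class V E ` V"

definition twin_edges :: "'a set \<Rightarrow> 'a set set \<Rightarrow> 'a set set set" where
  "twin_edges V E = {{C, D} | C D. C \<in> twin_classes V E \<and> D \<in> twin_classes V E \<and> C \<noteq> D \<and>
       (\<exists>u\<in>C. \<exists>v\<in>D. {u, v} \<in> E)}"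

definition is_clique :: "'a set set \<Rightarrow> 'a set \<Rightarrow> bool" where
  "is_clique E S \<longleftrightarrow> (\<forall>u\<in>S. \<forall>v\<in>S. u \<noteq> v \<longrightarrow> {u, v} \<in> E)"

definition type_1K :: "'a set set \<Rightarrow> 'a set \<Rightarrow> bool" where
  "type_1K E C \<longleftrightarrow> card C = 1 \<or> (card C \<ge> 2 \<and> is_clique E C)"

definition K3_V :: "nat set" where "K3_V = {0, 1, 2}"
definition K3_E :: "nat set set" where "K3_E = {{u, v} | u v. u \<in> K3_V \<and> v \<in> K3_V \<and> u \<noteq> v}"

definition tri_part :: "nat \<Rightarrow> nat \<Rightarrow> nat \<Rightarrow> nat" where
  "tri_part a b x = (if x < a then 0 else if x < a + b then 1 else 2)"

definition Ktri_V :: "nat \<Rightarrow> nat \<Rightarrow> nat \<Rightarrow> nat set" where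
  "Ktri_V a b c = {..<a + b + c}"

definition Ktri_E :: "nat \<Rightarrow> nat \<Rightarrow> nat \<Rightarrow> nat set set" where
  "Ktri_E a b c = {{u, v} | u v. u \<in> Ktri_V a b c \<and> v \<in> Ktri_V a b c \<and>
      tri_part a b u \<noteq> tri_part a b v}"

end

theory Submission
  imports Defs
begin

text \<open>A twin class that is not of type (1K) is an independent set with at least two vertices,
  and twin classes adjacent in G* are completely joined.  So G consists of three classes
  X0, X1, X2, pairwise completely joined, where X1 and X2 are independent sets of size at
  least 2.  Colouring every class injectively, with pairwise different colour sets, gives a
  distinguishing colouring; choosing the colour sets as shifted intervals yields
  D(G) \<le> n(G) - 3 unless the class sizes are 1, 2, 2.  In that case G is K_{1,2,2}: twins
  must get different colours, and with only two colours the exchange of X1 and X2 preserves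
  colours, so D(G) = 3 = n(G) - 2.  The graphs K_{1,1,t} have two classes of type (1) and
  never satisfy the hypothesis.\<close>

lemma graph_edgeD:
  assumes "graph V E" "{u, v} \<in> E"
  shows "u \<noteq> v" "u \<in> V" "v \<in> V"
  using assms unfolding graph_def by (auto simp: doubleton_eq_iff)

lemma graph_no_loop: "graph V E \<Longrightarrow> {u} \<notin> E"
  using graph_edgeD(1)[of V E u u] by auto

lemma mem_nbhd_iff: "x \<in> nbhd V E u \<longleftrightarrow> x \<in> V \<and> {u, x} \<in> E"
  unfolding nbhd_def by auto

lemma twins_sym: "twins V E u v \<Longrightarrow> twins V E v u"
  unfolding twins_def by auto

lemma twins_edge:
  assumes g: "graph V E" and "twins V E u w" "{u, v} \<in> E" "v \<noteq> w"
  shows "{w, v} \<in> E"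
proof -
  have "v \<in> nbhd V E u - {w}" using assms graph_edgeD[OF g] by (auto simp: mem_nbhd_iff)
  then have "v \<in> nbhd V E w - {u}" using assms(2) unfolding twins_def by simp
  then show ?thesis by (simp add: mem_nbhd_iff)
qed

lemma twins_iff:
  assumes g: "graph V E"
  shows "twins V E u v \<longleftrightarrow> u \<noteq> v \<and> (\<forall>x \<in> V - {u, v}. {u, x} \<in> E \<longleftrightarrow> {v, x} \<in> E)"
  using graph_no_loop[OF g] unfolding twins_def by (auto simp: mem_nbhd_iff set_eq_iff)

lemma twins_trans_edge:
  assumes g: "graph V E" and uv: "twins V E u v" and vw: "twins V E v w"
    and "u \<noteq> w" and ux: "{u, x} \<in> E" and "x \<noteq> w"
  shows "{w, x} \<in> E"
proof (cases "x = v")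
  case True
  have "{v, u} \<in> E" using ux True by (simp add: insert_commute)
  then have "{u, w} \<in> E" using twins_edge[OF g vw] \<open>u \<noteq> w\<close> by (simp add: insert_commute)
  then have "{v, w} \<in> E" using twins_edge[OF g uv] \<open>x \<noteq> w\<close> True by simp
  then show ?thesis using True by (simp add: insert_commute)
next
  case False
  then have "{v, x} \<in> E" using twins_edge[OF g uv ux] by simp
  then show ?thesis using twins_edge[OF g vw] \<open>x \<noteq> w\<close> by simp
qed

lemma twins_trans:
  assumes g: "graph V E" and uv: "twins V E u v" and vw: "twins V E v w" and "u \<noteq> w"
  shows "twins V E u w"
proof -
  have "{w, x} \<in> E \<longleftrightarrow> {u, x} \<in> E" if "x \<noteq> u" "x \<noteq> w" for x
    using twins_trans_edge[OF g uv vw] twins_trans_edge[OF g twins_sym[OF vw] twins_sym[OF uv]]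
      \<open>u \<noteq> w\<close> that by blast
  then have "x \<in> nbhd V E u - {w} \<longleftrightarrow> x \<in> nbhd V E w - {u}" for x
    using graph_no_loop[OF g, of x] by (cases "x = u \<or> x = w") (auto simp: mem_nbhd_iff)
  then show ?thesis
    using \<open>u \<noteq> w\<close> unfolding twins_def by blast
qed

lemma twin_class_cong:
  assumes g: "graph V E" and "u \<in> twin_class V E v"
  shows "twin_class V E u = twin_class V E v"
proof (cases "u = v")
  case False
  then have uv: "twins V E u v" and "u \<in> V" using assms(2) unfolding twin_class_def by auto
  have "twins V E x v" if "twins V E x u" "x \<noteq> v" for x
    using twins_trans[OF g that(1) uv that(2)] .
  moreover have "twins V E x u" if "twins V E x v" "x \<noteq> u" for x
    using twins_trans[OF g that(1) twins_sym[OF uv] that(2)] .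
  ultimately show ?thesis
    using uv twins_sym[OF uv] \<open>u \<in> V\<close> unfolding twin_class_def by blast
qed simp

lemma self_in_twin_class: "v \<in> V \<Longrightarrow> v \<in> twin_class V E v"
  unfolding twin_class_def by simp

lemma twin_class_subset: "twin_class V E v \<subseteq> V"
  unfolding twin_class_def by auto

lemma twin_classes_subset: "X \<in> twin_classes V E \<Longrightarrow> X \<subseteq> V"
  unfolding twin_classes_def twin_class_def by auto

lemma twin_classes_eq_twin_class:
  assumes g: "graph V E" and "X \<in> twin_classes V E" "v \<in> X"
  shows "X = twin_class V E v"
  using assms twin_class_cong[OF g] unfolding twin_classes_def by auto

lemma twin_classes_twins:
  assumes g: "graph V E" and "X \<in> twin_classes V E" "u \<in> X" "v \<in> X" "u \<noteq> v"
  shows "twins V E u v"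
  using twin_classes_eq_twin_class[OF g assms(2,4)] assms(3,5) unfolding twin_class_def by auto

lemma twin_class_clique_if_edge:
  assumes g: "graph V E" and X: "X \<in> twin_classes V E"
    and "u \<in> X" "v \<in> X" and uv: "{u, v} \<in> E"
  shows "is_clique E X"
proof -
  have to_v: "{x, v} \<in> E" if "x \<in> X" "x \<noteq> v" for x
    using twins_edge[OF g twin_classes_twins[OF g X \<open>u \<in> X\<close> that(1)] uv] uv that(2)
    by (cases "x = u") auto
  show ?thesis unfolding is_clique_def
  proof (intro ballI impI)
    fix x y assume "x \<in> X" "y \<in> X" "x \<noteq> y"
    show "{x, y} \<in> E"
    proof (cases "x = v \<or> y = v")
      case True
      then show ?thesis using to_v \<open>x \<in> X\<close> \<open>y \<in> X\<close> \<open>x \<noteq> y\<close> by (metis insert_commute)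
    next
      case False
      then have "{v, x} \<in> E" using to_v[OF \<open>x \<in> X\<close>] by (simp add: insert_commute)
      then show ?thesis
        using twins_edge[OF g twin_classes_twins[OF g X \<open>v \<in> X\<close> \<open>y \<in> X\<close>]] False \<open>x \<noteq> y\<close>
        by (auto simp: insert_commute)
    qed
  qed
qed

lemma twin_classes_disjoint:
  assumes g: "graph V E" and "X \<in> twin_classes V E" "Y \<in> twin_classes V E" "X \<noteq> Y"
  shows "X \<inter> Y = {}"
  using assms twin_classes_eq_twin_class[OF g] by blast

lemma twin_classes_complete_if_edge:
  assumes g: "graph V E" and X: "X \<in> twin_classes V E" and Y: "Y \<in> twin_classes V E"
    and "X \<noteq> Y" and u0: "u0 \<in> X" and v0: "v0 \<in> Y" and e: "{u0, v0} \<in> E"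
    and u: "u \<in> X" and v: "v \<in> Y"
  shows "{u, v} \<in> E"
proof -
  have XY: "X \<inter> Y = {}" using twin_classes_disjoint[OF g X Y \<open>X \<noteq> Y\<close>] .
  have "{u, v0} \<in> E"
    using twins_edge[OF g twin_classes_twins[OF g X u0 u] e] e XY u v0 by (cases "u = u0") auto
  then have "{v0, u} \<in> E" by (simp add: insert_commute)
  then show ?thesis
    using twins_edge[OF g twin_classes_twins[OF g Y v0 v]] XY u v
    by (cases "v = v0") (auto simp: insert_commute)
qed

lemma automorphism_twins_iff:
  assumes g: "graph V E" and f: "automorphism V E f" and "u \<in> V" "v \<in> V"
  shows "twins V E (f u) (f v) \<longleftrightarrow> twins V E u v"
proof -
  have bij: "bij_betw f V V" and edge: "\<forall>x\<in>V. \<forall>y\<in>V. {x, y} \<in> E \<longleftrightarrow> {f x, f y} \<in> E"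
    using f unfolding automorphism_def by auto
  then have inj: "inj_on f V" and "f ` V = V" by (auto simp: bij_betw_def)
  then have image: "f ` (V - {u, v}) = V - {f u, f v}"
    using inj_on_image_set_diff[OF inj, of V "{u, v}"] \<open>u \<in> V\<close> \<open>v \<in> V\<close> by auto
  have "f u \<noteq> f v \<longleftrightarrow> u \<noteq> v" using inj \<open>u \<in> V\<close> \<open>v \<in> V\<close> by (auto dest: inj_onD)
  moreover have "(\<forall>y \<in> V - {f u, f v}. {f u, y} \<in> E \<longleftrightarrow> {f v, y} \<in> E) \<longleftrightarrow>
      (\<forall>x \<in> V - {u, v}. {u, x} \<in> E \<longleftrightarrow> {v, x} \<in> E)"
    unfolding image[symmetric] using edge \<open>u \<in> V\<close> \<open>v \<in> V\<close> by auto
  ultimately show ?thesis unfolding twins_iff[OF g] by blast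
qed

lemma automorphism_twin_class:
  assumes g: "graph V E" and f: "automorphism V E f" and v: "v \<in> V"
  shows "twin_class V E (f v) = f ` twin_class V E v"
proof -
  have bij: "bij_betw f V V" using f unfolding automorphism_def by auto
  then have inj: "inj_on f V" and img: "f ` V = V" by (auto simp: bij_betw_def)
  have "x = v \<or> twins V E x v \<longleftrightarrow> f x = f v \<or> twins V E (f x) (f v)" if "x \<in> V" for x
    using automorphism_twins_iff[OF g f that v] inj_onD[OF inj _ that v] by auto
  then have "twin_class V E (f v) = f ` {x \<in> V. x = v \<or> twins V E x v}"
    unfolding twin_class_def by (subst (1) img[symmetric]) auto
  then show ?thesis unfolding twin_class_def .
qed

text \<open>A colour-preserving automorphism maps every twin class onto a twin class with the same
  colours, hence onto itself, and then fixes it pointwise.\<close>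
lemma distinguishing_if_inj_on_twin_classes:
  assumes g: "graph V E" and range: "c ` V \<subseteq> {..<k}"
    and inj: "\<And>X. X \<in> twin_classes V E \<Longrightarrow> inj_on c X"
    and apart: "\<And>X Y. X \<in> twin_classes V E \<Longrightarrow> Y \<in> twin_classes V E \<Longrightarrow> c ` X = c ` Y \<Longrightarrow> X = Y"
  shows "distinguishing V E k c"
  unfolding distinguishing_def
proof (intro conjI range allI impI ballI)
  fix f v assume f: "automorphism V E f \<and> (\<forall>v\<in>V. c (f v) = c v)" and v: "v \<in> V"
  then have fv: "f v \<in> V" unfolding automorphism_def bij_betw_def by auto
  have "c ` twin_class V E (f v) = c ` twin_class V E v"
    using f twin_class_subset[of V E v]
    unfolding automorphism_twin_class[OF g conjunct1[OF f] v] image_image by (auto intro!: image_cong)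
  then have "twin_class V E (f v) = twin_class V E v"
    using apart fv v unfolding twin_classes_def by blast
  then have "f v \<in> twin_class V E v" using self_in_twin_class[OF fv, of E] by simp
  then show "f v = v"
    using inj[of "twin_class V E v"] self_in_twin_class[OF v] f v unfolding twin_classes_def
    by (auto dest: inj_onD)
qed

lemma automorphism_swap_twins:
  assumes g: "graph V E" and uv: "twins V E u v" and "u \<in> V" "v \<in> V"
  shows "automorphism V E (\<lambda>x. if x = u then v else if x = v then u else x)"
    (is "automorphism V E ?f")
  unfolding automorphism_def
proof (intro conjI ballI)
  show "bij_betw ?f V V" by (rule bij_betw_byWitness[where f' = ?f]) (use assms in auto)
  have vu: "twins V E v u" using twins_sym[OF uv] .
  have uv': "u \<noteq> v" using uv unfolding twins_def by simp
  fix x y assume "x \<in> V" "y \<in> V"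
  show "{x, y} \<in> E \<longleftrightarrow> {?f x, ?f y} \<in> E"
    using twins_iff[OF g, of u v] twins_iff[OF g, of v u] uv vu uv' \<open>x \<in> V\<close> \<open>y \<in> V\<close>
      graph_no_loop[OF g] by (auto simp: insert_commute)
qed

lemma distinguishing_twins_colours_differ:
  assumes g: "graph V E" and c: "distinguishing V E k c"
    and uv: "twins V E u v" and "u \<in> V" "v \<in> V"
  shows "c u \<noteq> c v"
proof
  assume "c u = c v"
  then have "\<forall>x\<in>V. c (if x = u then v else if x = v then u else x) = c x" by auto
  then have "\<forall>x\<in>V. (if x = u then v else if x = v then u else x) = x"
    using c automorphism_swap_twins[OF assms(1,3-5)] unfolding distinguishing_def by blast
  then show False using uv \<open>u \<in> V\<close> unfolding twins_def by auto
qed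

lemma dist_num_le: "distinguishing V E k c \<Longrightarrow> dist_num V E \<le> k"
  unfolding dist_num_def by (rule Least_le) blast

lemma dist_num_eqI:
  assumes "distinguishing V E k c" and "\<And>k' c'. distinguishing V E k' c' \<Longrightarrow> k \<le> k'"
  shows "dist_num V E = k"
  unfolding dist_num_def using assms by (intro Least_equality) blast+

lemma ex_distinguishing_if_twin_class_colour_sets:
  assumes g: "graph V E"
    and S: "inj_on S (twin_classes V E)"
    and card_S: "\<And>X. X \<in> twin_classes V E \<Longrightarrow> card (S X) = card X"
    and range_S: "\<And>X. X \<in> twin_classes V E \<Longrightarrow> S X \<subseteq> {..<k}"
  shows "\<exists>c. distinguishing V E k c"
proof -
  have "finite V" using g unfolding graph_def by simp
  have "\<exists>b. bij_betw b X (S X)" if X: "X \<in> twin_classes V E" for X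
  proof (rule finite_same_card_bij)
    show "finite X" using finite_subset[OF twin_classes_subset[OF X] \<open>finite V\<close>] .
    show "finite (S X)" by (rule finite_subset[OF range_S[OF X]]) simp
  qed (use card_S[OF X] in simp)
  then obtain b where b: "\<And>X. X \<in> twin_classes V E \<Longrightarrow> bij_betw (b X) X (S X)"
    using bchoice[of "twin_classes V E" "\<lambda>X b. bij_betw b X (S X)"] by blast
  define c where "c v = b (twin_class V E v) v" for v
  have c_on: "c v = b X v" if "X \<in> twin_classes V E" "v \<in> X" for X v
    using twin_classes_eq_twin_class[OF g that] unfolding c_def by simp
  have image: "c ` X = S X" if X: "X \<in> twin_classes V E" for X
  proof -
    have "c ` X = b X ` X" using image_cong[OF refl c_on[OF X]] .
    then show ?thesis using b[OF X] by (simp add: bij_betw_def)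
  qed
  have inj: "inj_on c X" if X: "X \<in> twin_classes V E" for X
    using inj_on_cong[of X c "b X"] c_on[OF X] b[OF X] by (simp add: bij_betw_def)
  have "distinguishing V E k c"
  proof (rule distinguishing_if_inj_on_twin_classes[OF g _ inj])
    show "c ` V \<subseteq> {..<k}"
    proof
      fix y assume "y \<in> c ` V"
      then obtain v where "v \<in> V" "y = c v" by blast
      then have "twin_class V E v \<in> twin_classes V E" "y \<in> c ` twin_class V E v"
        using self_in_twin_class[of v V E] unfolding twin_classes_def by auto
      then show "y \<in> {..<k}" using image range_S by blast
    qed
    show "X = Y" if "X \<in> twin_classes V E" "Y \<in> twin_classes V E" "c ` X = c ` Y" for X Y
      using inj_onD[OF S _ that(1,2)] that(3) image[OF that(1)] image[OF that(2)] by simp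
  qed
  then show ?thesis by blast
qed

lemma graph_iso_K3:
  assumes "graph_iso V E K3_V K3_E"
  shows "card V = 3" "is_clique E V"
proof -
  obtain f where f: "bij_betw f V K3_V"
    and edge: "\<forall>u\<in>V. \<forall>v\<in>V. {u, v} \<in> E \<longleftrightarrow> {f u, f v} \<in> K3_E"
    using assms unfolding graph_iso_def by blast
  show "card V = 3" using bij_betw_same_card[OF f] by (simp add: K3_V_def)
  show "is_clique E V" unfolding is_clique_def
  proof (intro ballI impI)
    fix u v assume "u \<in> V" "v \<in> V" "u \<noteq> v"
    then have "f u \<in> K3_V" "f v \<in> K3_V" "f u \<noteq> f v"
      using f by (auto simp: bij_betw_def dest: inj_onD)
    then have "{f u, f v} \<in> K3_E" unfolding K3_E_def by blast
    then show "{u, v} \<in> E" using edge \<open>u \<in> V\<close> \<open>v \<in> V\<close> by blast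
  qed
qed

lemma twin_edgesD:
  assumes "{X, Y} \<in> twin_edges V E"
  shows "\<exists>u\<in>X. \<exists>v\<in>Y. {u, v} \<in> E"
proof -
  obtain C D where CD: "{X, Y} = {C, D}" and "\<exists>u\<in>C. \<exists>v\<in>D. {u, v} \<in> E"
    using assms unfolding twin_edges_def mem_Collect_eq by (elim exE conjE) simp
  moreover from this have "\<exists>u\<in>D. \<exists>v\<in>C. {u, v} \<in> E" by (metis insert_commute)
  moreover have "X = C \<and> Y = D \<or> X = D \<and> Y = C" using CD by (simp add: doubleton_eq_iff)
  ultimately show ?thesis by blast
qed

lemma card_3_obtain_two_not:
  assumes "card T = 3" and "card {C \<in> T. P C} \<le> 1"
  obtains A B C where "T = {A, B, C}" "A \<noteq> B" "A \<noteq> C" "B \<noteq> C" "\<not> P B" "\<not> P C"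
proof -
  obtain x y z where T: "T = {x, y, z}" and "x \<noteq> y" "y \<noteq> z" "x \<noteq> z"
    using assms(1) unfolding card_3_iff by blast
  have "\<not> (P u \<and> P v)" if "u \<in> T" "v \<in> T" "u \<noteq> v" for u v
  proof
    assume "P u \<and> P v"
    then have "card {u, v} \<le> card {C \<in> T. P C}"
      using that T by (intro card_mono) auto
    then show False using assms(2) \<open>u \<noteq> v\<close> by simp
  qed
  then consider "\<not> P y \<and> \<not> P z" | "\<not> P x \<and> \<not> P z" | "\<not> P x \<and> \<not> P y"
    using T \<open>x \<noteq> y\<close> \<open>y \<noteq> z\<close> \<open>x \<noteq> z\<close> by (metis insertCI)
  then show ?thesis
  proof cases
    case 1
    then show ?thesis using that[of x y z] T \<open>x \<noteq> y\<close> \<open>y \<noteq> z\<close> \<open>x \<noteq> z\<close> by blast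
  next
    case 2
    have "T = {y, x, z}" using T by auto
    then show ?thesis using 2 that[of y x z] \<open>x \<noteq> y\<close> \<open>y \<noteq> z\<close> \<open>x \<noteq> z\<close> by blast
  next
    case 3
    have "T = {z, x, y}" using T by auto
    then show ?thesis using 3 that[of z x y] \<open>x \<noteq> y\<close> \<open>y \<noteq> z\<close> \<open>x \<noteq> z\<close> by blast
  qed
qed

lemma twin_class_not_type_1K:
  assumes g: "graph V E" and X: "X \<in> twin_classes V E" and "\<not> type_1K E X"
  shows "2 \<le> card X" "u \<in> X \<Longrightarrow> v \<in> X \<Longrightarrow> {u, v} \<notin> E"
proof -
  have "finite X" using finite_subset[OF twin_classes_subset[OF X]] g by (simp add: graph_def)
  moreover have "X \<noteq> {}" using X self_in_twin_class unfolding twin_classes_def by fast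
  ultimately have "card X \<noteq> 0" by simp
  then show "2 \<le> card X" using \<open>\<not> type_1K E X\<close> unfolding type_1K_def by linarith
  then show "u \<in> X \<Longrightarrow> v \<in> X \<Longrightarrow> {u, v} \<notin> E"
    using twin_class_clique_if_edge[OF g X] \<open>\<not> type_1K E X\<close> unfolding type_1K_def by blast
qed

lemma offsets_for_three_classes:
  fixes a b c :: nat
  assumes "1 \<le> a" "2 \<le> b" "2 \<le> c"
    and "\<not> (a = 1 \<and> b = 2 \<and> c = 2)" "\<not> (a = 2 \<and> b = 2 \<and> c = 2)"
  obtains s0 s1 s2 where "s0 \<noteq> s1" "s0 \<noteq> s2" "s1 \<noteq> s2"
    "a + s0 \<le> a + b + c - 3" "b + s1 \<le> a + b + c - 3" "c + s2 \<le> a + b + c - 3"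
proof -
  have "\<exists>s0 s1 s2::nat. s0 \<noteq> s1 \<and> s0 \<noteq> s2 \<and> s1 \<noteq> s2 \<and>
      a + s0 \<le> a + b + c - 3 \<and> b + s1 \<le> a + b + c - 3 \<and> c + s2 \<le> a + b + c - 3"
    using assms by presburger
  then show ?thesis using that by blast
qed

lemma mem_Ktri_E_iff:
  "x \<in> Ktri_V a b c \<Longrightarrow> y \<in> Ktri_V a b c \<Longrightarrow>
    {x, y} \<in> Ktri_E a b c \<longleftrightarrow> tri_part a b x \<noteq> tri_part a b y"
  unfolding Ktri_E_def by (auto simp: doubleton_eq_iff)

lemma card_Ktri_V: "card (Ktri_V a b c) = a + b + c"
  by (simp add: Ktri_V_def)

locale twin_graph_K3 =
  fixes V :: "'a set" and E :: "'a set set" and X0 X1 X2 :: "'a set"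
  assumes graph: "graph V E"
    and classes: "twin_classes V E = {X0, X1, X2}"
    and distinct: "X0 \<noteq> X1" "X0 \<noteq> X2" "X1 \<noteq> X2"
    and complete: "is_clique (twin_edges V E) (twin_classes V E)"
    and X1_not_1K: "\<not> type_1K E X1" and X2_not_1K: "\<not> type_1K E X2"
begin

lemma classes_mem: "X0 \<in> twin_classes V E" "X1 \<in> twin_classes V E" "X2 \<in> twin_classes V E"
  using classes by auto

lemma edge_between:
  assumes "X \<in> twin_classes V E" "Y \<in> twin_classes V E" "X \<noteq> Y" "u \<in> X" "v \<in> Y"
  shows "{u, v} \<in> E"
proof -
  have "{X, Y} \<in> twin_edges V E" using complete assms(1-3) unfolding is_clique_def by blast
  then obtain u0 v0 where "u0 \<in> X" "v0 \<in> Y" "{u0, v0} \<in> E" using twin_edgesD by blast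
  then show ?thesis using twin_classes_complete_if_edge[OF graph assms(1-3)] assms(4,5) by blast
qed

lemma finite_classes: "finite X0" "finite X1" "finite X2"
  using graph twin_classes_subset[OF classes_mem(1)] twin_classes_subset[OF classes_mem(2)]
    twin_classes_subset[OF classes_mem(3)] unfolding graph_def by (auto intro: finite_subset)

lemma V_eq: "V = X0 \<union> X1 \<union> X2"
proof
  show "V \<subseteq> X0 \<union> X1 \<union> X2"
  proof
    fix v assume "v \<in> V"
    then have "twin_class V E v \<in> {X0, X1, X2}" using classes unfolding twin_classes_def by blast
    then show "v \<in> X0 \<union> X1 \<union> X2" using self_in_twin_class[OF \<open>v \<in> V\<close>, of E] by blast
  qed
  show "X0 \<union> X1 \<union> X2 \<subseteq> V" using twin_classes_subset classes_mem by blast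
qed

lemma classes_disjoint: "X0 \<inter> X1 = {}" "X0 \<inter> X2 = {}" "X1 \<inter> X2 = {}"
  using twin_classes_disjoint[OF graph] classes_mem distinct by auto

lemma card_V: "card V = card X0 + card X1 + card X2"
  using finite_classes classes_disjoint by (simp add: V_eq card_Un_disjoint Int_Un_distrib2)

lemma card_classes: "1 \<le> card X0" "2 \<le> card X1" "2 \<le> card X2"
proof -
  have "X0 \<noteq> {}" using classes_mem(1) self_in_twin_class unfolding twin_classes_def by fast
  then show "1 \<le> card X0" using finite_classes(1) by (simp add: Suc_le_eq card_gt_0_iff)
  show "2 \<le> card X1" "2 \<le> card X2"
    using twin_class_not_type_1K(1)[OF graph] classes_mem X1_not_1K X2_not_1K by auto
qed

lemma no_edge_in_X1: "u \<in> X1 \<Longrightarrow> v \<in> X1 \<Longrightarrow> {u, v} \<notin> E"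
  using twin_class_not_type_1K(2)[OF graph classes_mem(2) X1_not_1K] .

lemma no_edge_in_X2: "u \<in> X2 \<Longrightarrow> v \<in> X2 \<Longrightarrow> {u, v} \<notin> E"
  using twin_class_not_type_1K(2)[OF graph classes_mem(3) X2_not_1K] .

definition part :: "'a \<Rightarrow> nat" where
  "part v = (if v \<in> X0 then 0 else if v \<in> X1 then 1 else 2)"

lemma part_simps: "v \<in> X0 \<Longrightarrow> part v = 0" "v \<in> X1 \<Longrightarrow> part v = 1" "v \<in> X2 \<Longrightarrow> part v = 2"
  using classes_disjoint unfolding part_def by auto

lemma edge_iff_part:
  assumes X0_edgeless: "\<And>u v. u \<in> X0 \<Longrightarrow> v \<in> X0 \<Longrightarrow> {u, v} \<notin> E"
    and "u \<in> V" "v \<in> V"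
  shows "{u, v} \<in> E \<longleftrightarrow> part u \<noteq> part v"
proof -
  obtain X Y where X: "X \<in> twin_classes V E" "u \<in> X" and Y: "Y \<in> twin_classes V E" "v \<in> Y"
    using \<open>u \<in> V\<close> \<open>v \<in> V\<close> V_eq classes by blast
  have "X = X0 \<or> X = X1 \<or> X = X2" "Y = X0 \<or> Y = X1 \<or> Y = X2" using X(1) Y(1) classes by auto
  then have "part u = part v \<longleftrightarrow> X = Y"
    using X(2) Y(2) distinct by (elim disjE) (simp_all add: part_simps)
  moreover have "{u, v} \<notin> E" if "X = Y"
    using that X Y X0_edgeless no_edge_in_X1 no_edge_in_X2 classes by auto
  ultimately show ?thesis using edge_between[OF X(1) Y(1) _ X(2) Y(2)] by blast
qed


lemma ex_distinguishing_if_colour_sets: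
  assumes "A0 \<noteq> A1" "A0 \<noteq> A2" "A1 \<noteq> A2"
    and "card A0 = card X0" "card A1 = card X1" "card A2 = card X2"
    and "A0 \<union> A1 \<union> A2 \<subseteq> {..<k}"
  shows "\<exists>c. distinguishing V E k c"
proof (rule ex_distinguishing_if_twin_class_colour_sets[OF graph])
  let ?S = "\<lambda>X. if X = X0 then A0 else if X = X1 then A1 else A2"
  show "inj_on ?S (twin_classes V E)"
    unfolding classes using assms(1-3) distinct by (auto simp: inj_on_def)
  show "card (?S X) = card X" "?S X \<subseteq> {..<k}" if "X \<in> twin_classes V E" for X
    using that assms(4-7) distinct unfolding classes by auto
qed

lemma dist_num_le_card_V_minus_3:
  assumes not_K122: "\<not> (card X0 = 1 \<and> card X1 = 2 \<and> card X2 = 2)"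
  shows "dist_num V E \<le> card V - 3"
proof (cases "card X0 = 2 \<and> card X1 = 2 \<and> card X2 = 2")
  case True
  have "\<exists>c. distinguishing V E 3 c"
    by (rule ex_distinguishing_if_colour_sets[of "{0, 1}" "{1, 2}" "{0, 2}"])
      (use True in \<open>simp_all add: doubleton_eq_iff\<close>)
  then show ?thesis using True card_V dist_num_le by fastforce
next
  case False
  obtain s0 s1 s2 where s: "s0 \<noteq> s1" "s0 \<noteq> s2" "s1 \<noteq> s2"
    "card X0 + s0 \<le> card V - 3" "card X1 + s1 \<le> card V - 3" "card X2 + s2 \<le> card V - 3"
    using offsets_for_three_classes[OF card_classes not_K122 False] unfolding card_V by blast
  have "\<exists>c. distinguishing V E (card V - 3) c"
    by (rule ex_distinguishing_if_colour_sets[of "{s0..<s0 + card X0}" "{s1..<s1 + card X1}"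
          "{s2..<s2 + card X2}"])
      (use s card_classes in \<open>auto simp: atLeastLessThan_eq_iff\<close>)
  then show ?thesis using dist_num_le by blast
qed


lemma automorphism_if_permutes_parts:
  assumes X0_edgeless: "\<And>u v. u \<in> X0 \<Longrightarrow> v \<in> X0 \<Longrightarrow> {u, v} \<notin> E"
    and involution: "\<And>v. v \<in> V \<Longrightarrow> f v \<in> V \<and> f (f v) = v"
    and "inj \<pi>" and part_f: "\<And>v. v \<in> V \<Longrightarrow> part (f v) = \<pi> (part v)"
  shows "automorphism V E f"
  unfolding automorphism_def
proof (intro conjI ballI)
  show "bij_betw f V V" by (rule bij_betw_byWitness[where f' = f]) (use involution in auto)
  fix u v assume "u \<in> V" "v \<in> V"
  have "{f u, f v} \<in> E \<longleftrightarrow> \<pi> (part u) \<noteq> \<pi> (part v)"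
    using edge_iff_part[OF X0_edgeless] involution part_f \<open>u \<in> V\<close> \<open>v \<in> V\<close> by auto
  also have "\<dots> \<longleftrightarrow> {u, v} \<in> E"
    using edge_iff_part[OF X0_edgeless \<open>u \<in> V\<close> \<open>v \<in> V\<close>] injD[OF \<open>inj \<pi>\<close>] by auto
  finally show "{u, v} \<in> E \<longleftrightarrow> {f u, f v} \<in> E" by simp
qed

lemma X0_edgeless_if_singleton:
  assumes "card X0 = 1" "u \<in> X0" "v \<in> X0"
  shows "{u, v} \<notin> E"
  using assms graph_no_loop[OF graph] by (auto simp: card_1_singleton_iff)

text \<open>With two colours the twins in X1 and in X2 must be coloured 0 and 1 in both classes, and
  the colour-preserving exchange of X1 with X2 is a nontrivial automorphism.\<close>
lemma three_le_if_distinguishing: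
  assumes K122: "card X0 = 1" "card X1 = 2" "card X2 = 2" and c: "distinguishing V E k c"
  shows "3 \<le> k"
proof (rule ccontr)
  assume "\<not> 3 \<le> k"
  then have colours: "c v < 2" if "v \<in> V" for v
    using c that unfolding distinguishing_def by auto
  have apart: "c u \<noteq> c v" if "X \<in> twin_classes V E" "u \<in> X" "v \<in> X" "u \<noteq> v" for X u v
    using distinguishing_twins_colours_differ[OF graph c twin_classes_twins[OF graph that]]
      twin_classes_subset[OF that(1)] that(2,3) by blast
  obtain x x' where X1: "X1 = {x, x'}" "x \<noteq> x'" using K122(2) card_2_iff by metis
  obtain y y' where X2: "X2 = {y, y'}" "y \<noteq> y'" using K122(3) card_2_iff by metis
  have "c x \<noteq> c x'" "c y \<noteq> c y'" using apart classes_mem X1 X2 by auto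
  moreover have "c x < 2" "c x' < 2" "c y < 2" "c y' < 2" using colours X1 X2 V_eq by auto
  ultimately have "c y = c x \<and> c y' = c x' \<or> c y' = c x \<and> c y = c x'" by linarith
  then obtain w w' where X2': "X2 = {w, w'}" and cw: "c w = c x" "c w' = c x'"
    using X2(1) insert_commute by metis
  define f where "f v = (if v = x then w else if v = w then x else if v = x' then w'
    else if v = w' then x' else v)" for v
  define \<pi> :: "nat \<Rightarrow> nat" where "\<pi> i = (if i = 1 then 2 else if i = 2 then 1 else i)" for i
  have mem: "x \<in> X1" "x' \<in> X1" "w \<in> X2" "w' \<in> X2" using X1 X2' by auto
  then have distinct_vertices: "x \<noteq> w" "x \<noteq> w'" "x' \<noteq> w" "x' \<noteq> w'" "w \<noteq> w'"
    using classes_disjoint(3) X2 X2' by auto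
  have vertex_cases: "v \<in> X0 \<and> v \<notin> {x, x', w, w'} \<or> v = x \<or> v = x' \<or> v = w \<or> v = w'"
    if "v \<in> V" for v
    using that V_eq X1 X2' classes_disjoint by auto
  have "automorphism V E f"
  proof (rule automorphism_if_permutes_parts[OF X0_edgeless_if_singleton[OF K122(1)]])
    show "inj \<pi>" unfolding \<pi>_def inj_def by auto
    show "f v \<in> V \<and> f (f v) = v" if "v \<in> V" for v
      using vertex_cases[OF that] that mem V_eq X1(2) distinct_vertices unfolding f_def by auto
    show "part (f v) = \<pi> (part v)" if "v \<in> V" for v
      using vertex_cases[OF that] mem X1(2) distinct_vertices
      unfolding f_def \<pi>_def by (auto simp: part_simps)
  qed
  moreover have "c (f v) = c v" if "v \<in> V" for v using cw unfolding f_def by auto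
  ultimately have "f x = x" using c X1 V_eq unfolding distinguishing_def by blast
  then show False using distinct_vertices unfolding f_def by simp
qed


lemma graph_iso_Ktri:
  assumes X0_edgeless: "\<And>u v. u \<in> X0 \<Longrightarrow> v \<in> X0 \<Longrightarrow> {u, v} \<notin> E"
  shows "graph_iso V E (Ktri_V (card X0) (card X1) (card X2))
    (Ktri_E (card X0) (card X1) (card X2))"
proof -
  define a b c where "a = card X0" and "b = card X1" and "c = card X2"
  have "\<exists>e0. bij_betw e0 X0 {0..<a}" "\<exists>e1. bij_betw e1 X1 {a..<a + b}"
    "\<exists>e2. bij_betw e2 X2 {a + b..<a + b + c}"
    by (rule finite_same_card_bij; simp add: finite_classes a_def b_def c_def)+
  then obtain e0 e1 e2 where e0: "bij_betw e0 X0 {0..<a}" and e1: "bij_betw e1 X1 {a..<a + b}"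
    and e2: "bij_betw e2 X2 {a + b..<a + b + c}" by blast
  define f where "f v = (if v \<in> X0 then e0 v else if v \<in> X1 then e1 v else e2 v)" for v
  have "bij_betw f X0 {0..<a} \<longleftrightarrow> bij_betw e0 X0 {0..<a}"
    by (rule bij_betw_cong) (simp add: f_def)
  moreover have "bij_betw f X1 {a..<a + b} \<longleftrightarrow> bij_betw e1 X1 {a..<a + b}"
    by (rule bij_betw_cong) (use classes_disjoint in \<open>auto simp: f_def\<close>)
  moreover have "bij_betw f X2 {a + b..<a + b + c} \<longleftrightarrow> bij_betw e2 X2 {a + b..<a + b + c}"
    by (rule bij_betw_cong) (use classes_disjoint in \<open>auto simp: f_def\<close>)
  ultimately have "bij_betw f (X0 \<union> X1 \<union> X2) ({0..<a} \<union> {a..<a + b} \<union> {a + b..<a + b + c})"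
    using e0 e1 e2 by (intro bij_betw_combine) auto
  moreover have "{0..<a} \<union> {a..<a + b} \<union> {a + b..<a + b + c} = Ktri_V a b c"
    unfolding Ktri_V_def by auto
  ultimately have bij: "bij_betw f V (Ktri_V a b c)" by (simp add: V_eq)
  have "tri_part a b (f v) = part v" if "v \<in> V" for v
    using that V_eq bij_betwE[OF e0] bij_betwE[OF e1] bij_betwE[OF e2] classes_disjoint
    by (auto simp: f_def tri_part_def part_simps)
  then have "{u, v} \<in> E \<longleftrightarrow> {f u, f v} \<in> Ktri_E a b c" if "u \<in> V" "v \<in> V" for u v
    using that edge_iff_part[OF X0_edgeless] mem_Ktri_E_iff bij_betwE[OF bij] by metis
  then show ?thesis using bij unfolding graph_iso_def a_def b_def c_def by blast
qed

text \<open>In K_{1,1,t} two distinct non-adjacent vertices lie in the part of size t, but X1 and X2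
  each contain such a pair and are completely joined to each other.\<close>
lemma not_graph_iso_K11t: "\<not> graph_iso V E (Ktri_V 1 1 t) (Ktri_E 1 1 t)"
proof
  assume "graph_iso V E (Ktri_V 1 1 t) (Ktri_E 1 1 t)"
  then obtain f where bij: "bij_betw f V (Ktri_V 1 1 t)"
    and edge: "\<forall>u\<in>V. \<forall>v\<in>V. {u, v} \<in> E \<longleftrightarrow> {f u, f v} \<in> Ktri_E 1 1 t"
    unfolding graph_iso_def by blast
  have last_part: "tri_part 1 1 (f u) = 2"
    if "u \<in> V" "u' \<in> V" "u \<noteq> u'" "{u, u'} \<notin> E" for u u'
  proof -
    have "f u \<noteq> f u'" using bij that(1-3) by (auto simp: bij_betw_def dest: inj_onD)
    moreover have "tri_part 1 1 (f u) = tri_part 1 1 (f u')"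
      using edge that mem_Ktri_E_iff bij_betwE[OF bij] by metis
    ultimately show ?thesis unfolding tri_part_def by (auto split: if_splits)
  qed
  obtain x x' where "x \<in> X1" "x' \<in> X1" "x \<noteq> x'"
    using card_classes(2) card_le_Suc0_iff_eq[OF finite_classes(2)]
    by (metis not_less_eq_eq numeral_2_eq_2)
  obtain y y' where "y \<in> X2" "y' \<in> X2" "y \<noteq> y'"
    using card_classes(3) card_le_Suc0_iff_eq[OF finite_classes(3)]
    by (metis not_less_eq_eq numeral_2_eq_2)
  have "tri_part 1 1 (f x) = tri_part 1 1 (f y)"
    using last_part[of x x'] last_part[of y y'] no_edge_in_X1 no_edge_in_X2 V_eq
      \<open>x \<in> X1\<close> \<open>x' \<in> X1\<close> \<open>x \<noteq> x'\<close> \<open>y \<in> X2\<close> \<open>y' \<in> X2\<close> \<open>y \<noteq> y'\<close> by auto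
  moreover have "{x, y} \<in> E"
    using edge_between[OF classes_mem(2,3) distinct(3) \<open>x \<in> X1\<close> \<open>y \<in> X2\<close>] .
  ultimately show False
    using edge mem_Ktri_E_iff bij_betwE[OF bij] V_eq \<open>x \<in> X1\<close> \<open>y \<in> X2\<close> by blast
qed

lemma dist_num_K122:
  assumes "card X0 = 1" "card X1 = 2" "card X2 = 2"
  shows "dist_num V E = 3"
proof -
  obtain c where "distinguishing V E 3 c"
    using ex_distinguishing_if_colour_sets[of "{2}" "{0, 1}" "{1, 2}" 3] assms
    by (auto simp: doubleton_eq_iff)
  then show ?thesis using dist_num_eqI three_le_if_distinguishing[OF assms] by blast
qed

theorem dist_num_eq_card_V_minus_2_iff:
  "dist_num V E = card V - 2 \<longleftrightarrow>
     graph_iso V E (Ktri_V 1 2 2) (Ktri_E 1 2 2) \<or>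
     (\<exists>t\<ge>2. graph_iso V E (Ktri_V 1 1 t) (Ktri_E 1 1 t))"
proof (cases "card X0 = 1 \<and> card X1 = 2 \<and> card X2 = 2")
  case True
  then have "graph_iso V E (Ktri_V 1 2 2) (Ktri_E 1 2 2)"
    using graph_iso_Ktri[OF X0_edgeless_if_singleton] by simp
  then show ?thesis using True dist_num_K122 card_V by simp
next
  case False
  have "\<not> graph_iso V E (Ktri_V 1 2 2) (Ktri_E 1 2 2)"
  proof
    assume "graph_iso V E (Ktri_V 1 2 2) (Ktri_E 1 2 2)"
    then have "card V = 5"
      unfolding graph_iso_def using bij_betw_same_card card_Ktri_V by fastforce
    then show False using False card_V card_classes by linarith
  qed
  moreover have "dist_num V E < card V - 2"
    using dist_num_le_card_V_minus_3[OF False] card_V card_classes by linarith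
  ultimately show ?thesis using not_graph_iso_K11t by auto
qed

end

theorem lemma4p5:
  fixes V :: "'a set" and E :: "'a set set"
  assumes "graph V E"
    and "graph_iso (twin_classes V E) (twin_edges V E) K3_V K3_E"
    and "card {C \<in> twin_classes V E. type_1K E C} \<le> 1"
  shows "dist_num V E = card V - 2 \<longleftrightarrow>
         (graph_iso V E (Ktri_V 1 2 2) (Ktri_E 1 2 2) \<or>
          (\<exists>t\<ge>2. graph_iso V E (Ktri_V 1 1 t) (Ktri_E 1 1 t)))"
proof -
  obtain X0 X1 X2 where "twin_classes V E = {X0, X1, X2}" "X0 \<noteq> X1" "X0 \<noteq> X2" "X1 \<noteq> X2"
    "\<not> type_1K E X1" "\<not> type_1K E X2"
    using card_3_obtain_two_not[OF graph_iso_K3(1)[OF assms(2)] assms(3)] by metis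
  then interpret twin_graph_K3 V E X0 X1 X2
    using assms(1) graph_iso_K3(2)[OF assms(2)] by unfold_locales
  show ?thesis by (rule dist_num_eq_card_V_minus_2_iff)
qed

end
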